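(* Let $\kappa=(a,b,c,d)$ with $a,b,c,d\notin\{\pm2\}$, let $\rho\in\mathcal H_\kappa$, and let $(x,y,z)=(\operatorname{tr}\rho(AB),\operatorname{tr}\rho(BC),\operatorname{tr}\rho(CA))$. Then $\rho$ is a $\mathrm{Spin}(2)$-representation if and only if $x$ is an endpoint of both $I_{a,b}$ and $I_{c,d}$, $y$ is an endpoint of both $I_{b,c}$ and $I_{a,d}$, and $z$ is an endpoint of both $I_{a,c}$ and $I_{b,d}$.
   Context: $M$ is a four-holed sphere with $\pi_1(M)=\langle A,B,C,D : ABCD=I\rangle$, $A,B,C,D$ the boundary classes. For $\kappa=(a,b,c,d)\in[-2,2]^4$, $\mathcal H_\kappa$ is the set of homomorphisms $\rho:\pi_1(M)\to\mathrm{SU}(2)$ with $\operatorname{tr}\rho(A)=a$, $\operatorname{tr}\rho(B)=b$, $\operatorname{tr}\rho(C)=c$, $\operatorname{tr}\rho(D)=d$. For $s,t\in[-2,2]$, $I_{s,t}=\Big[\frac{st-\sqrt{(s^2-4)(t^2-4)}}{2},\ \frac{st+\sqrt{(s^2-4)(t^2-4)}}{2}\Big]$. $\mathrm{Spin}(2)\subset\mathrm{SU}(2)$ is the circle subgroup $\{e^{i\theta}\}$, where $e^{i\theta}$ denotes the matrix $\begin{pmatrix}\cos\theta&\sin\theta\\-\sin\theta&\cos\theta\end{pmatrix}$. For a subgroup $G\subset\mathrm{SU}(2)$, $\rho$ is called a $G$-representation if some $\mathrm{SU}(2)$-conjugate of $\rho$ has image contained in $G$. *)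

theory Defs
  imports "HOL-Analysis.Analysis"
begin

type_synonym cmat = "complex^2^2"

definition mtr :: "cmat \<Rightarrow> complex" where
  "mtr M = M$1$1 + M$2$2"

definition madj :: "cmat \<Rightarrow> cmat" where
  "madj M = (\<chi> i j. cnj (M$j$i))"

definition SU2 :: "cmat set" where
  "SU2 = {M. M ** madj M = mat 1 \<and> det M = 1}"

definition eitheta :: "real \<Rightarrow> cmat" where
  "eitheta \<theta> = (\<chi> i j. if i = j then complex_of_real (cos \<theta>)
                     else if i = 1 then complex_of_real (sin \<theta>)
                     else - complex_of_real (sin \<theta>))"

definition Spin2 :: "cmat set" where
  "Spin2 = range eitheta"

text \<open>A homomorphism pi_1(M) -> SU(2) is the quadruple (rho A, rho B, rho C, rho D)
  of elements of SU(2) with rho A rho B rho C rho D = I.\<close>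
definition is_rep :: "cmat \<Rightarrow> cmat \<Rightarrow> cmat \<Rightarrow> cmat \<Rightarrow> bool" where
  "is_rep RA RB RC RD \<longleftrightarrow> RA \<in> SU2 \<and> RB \<in> SU2 \<and> RC \<in> SU2 \<and> RD \<in> SU2
     \<and> RA ** RB ** RC ** RD = mat 1"

definition H_kappa :: "real \<Rightarrow> real \<Rightarrow> real \<Rightarrow> real \<Rightarrow> (cmat \<times> cmat \<times> cmat \<times> cmat) set" where
  "H_kappa a b c d = {(RA, RB, RC, RD). is_rep RA RB RC RD
     \<and> mtr RA = complex_of_real a \<and> mtr RB = complex_of_real b
     \<and> mtr RC = complex_of_real c \<and> mtr RD = complex_of_real d}"

inductive_set rep_image :: "cmat \<Rightarrow> cmat \<Rightarrow> cmat \<Rightarrow> cmat \<Rightarrow> cmat set"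
  for RA RB RC RD where
  one: "mat 1 \<in> rep_image RA RB RC RD"
| mul: "M \<in> rep_image RA RB RC RD \<Longrightarrow> X \<in> {RA, RB, RC, RD} \<Longrightarrow> M ** X \<in> rep_image RA RB RC RD"
| mul_inv: "M \<in> rep_image RA RB RC RD \<Longrightarrow> X \<in> {RA, RB, RC, RD} \<Longrightarrow> M ** matrix_inv X \<in> rep_image RA RB RC RD"

definition is_G_rep :: "cmat set \<Rightarrow> cmat \<Rightarrow> cmat \<Rightarrow> cmat \<Rightarrow> cmat \<Rightarrow> bool" where
  "is_G_rep G RA RB RC RD \<longleftrightarrow>
     (\<exists>g \<in> SU2. \<forall>M \<in> rep_image RA RB RC RD. g ** M ** matrix_inv g \<in> G)"

definition I_lo :: "real \<Rightarrow> real \<Rightarrow> real" where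
  "I_lo s t = (s * t - sqrt ((s^2 - 4) * (t^2 - 4))) / 2"

definition I_hi :: "real \<Rightarrow> real \<Rightarrow> real" where
  "I_hi s t = (s * t + sqrt ((s^2 - 4) * (t^2 - 4))) / 2"

definition I_int :: "real \<Rightarrow> real \<Rightarrow> real set" where
  "I_int s t = {I_lo s t .. I_hi s t}"

definition is_endpoint :: "real \<Rightarrow> real \<Rightarrow> real \<Rightarrow> bool" where
  "is_endpoint x s t \<longleftrightarrow> x = I_lo s t \<or> x = I_hi s t"

end

(* Write elements of SU(2) as unit quaternions quat t v = t + v1 i + v2 j + v3 k, so that
   tr = 2 t and tr (quat s v * quat t w) = 2 (s t - v.w).  For a = 2 s and b = 2 t one has
   (a^2 - 4) (b^2 - 4) = 16 |v|^2 |w|^2, so the endpoints of I_{a,b} are 2 (s t -+ |v| |w|):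
   tr (X Y) is an endpoint of I_{tr X, tr Y} exactly when the vector parts of X and Y are
   parallel, the equality case of Cauchy-Schwarz.

   If rho is conjugate into Spin(2), its generators become e^{i alpha}, ..., e^{i delta} with
   alpha + beta + gamma + delta in 2 pi Z, and the six conditions are instances of the cosine
   addition formula.  Conversely, a /= +-2 makes the vector part of rho(A) nonzero; already the
   conditions on x in I_{a,b} and z in I_{a,c} put rho(B) and rho(C), hence also
   rho(D) = (rho(A) rho(B) rho(C))^-1, into the circle subgroup with the same axis, and the
   rotation carrying that axis to the j-axis conjugates rho into Spin(2). *)

theory Submission
  imports Defs
begin

unbundle cross3_syntax

section \<open>Unit quaternions\<close>

(* The standard embedding of the quaternions: i, j, k are [[i,0],[0,-i]], [[0,1],[-1,0]] and
   [[0,i],[i,0]], so matrix multiplication is the Hamilton product. *)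
definition quat :: "real \<Rightarrow> real^3 \<Rightarrow> cmat" where
  "quat t v = (\<chi> i j. if i = 1 then (if j = 1 then Complex t (v$1) else Complex (v$2) (v$3))
                       else (if j = 1 then Complex (- v$2) (v$3) else Complex t (- v$1)))"

lemma quat_nth [simp]:
  "quat t v $ 1 $ 1 = Complex t (v$1)" "quat t v $ 1 $ 2 = Complex (v$2) (v$3)"
  "quat t v $ 2 $ 1 = Complex (- v$2) (v$3)" "quat t v $ 2 $ 2 = Complex t (- v$1)"
  by (simp_all add: quat_def)

lemma quat_eq_iff: "quat s v = quat t w \<longleftrightarrow> s = t \<and> v = w"
  by (auto simp: vec_eq_iff forall_2 forall_3 complex_eq_iff)

lemma quat_one: "quat 1 0 = mat 1"
  by (simp add: vec_eq_iff forall_2 mat_def complex_eq_iff)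

lemma mult_quat: "quat s v ** quat t w = quat (s * t - v \<bullet> w) (s *\<^sub>R w + t *\<^sub>R v + v \<times> w)"
  by (simp add: vec_eq_iff forall_2 matrix_matrix_mult_def sum_2 complex_eq_iff cross3_def
      inner_vec_def sum_3 algebra_simps)

lemma mtr_quat: "mtr (quat t v) = complex_of_real (2 * t)"
  by (simp add: mtr_def complex_eq_iff)

lemma mtr_mult_quat: "mtr (quat s v ** quat t w) = complex_of_real (2 * (s * t - v \<bullet> w))"
  by (simp add: mult_quat mtr_quat)

lemma madj_quat: "madj (quat t v) = quat t (- v)"
  by (simp add: madj_def vec_eq_iff forall_2 complex_eq_iff)

lemma det_quat: "det (quat t v) = complex_of_real (t\<^sup>2 + (norm v)\<^sup>2)"
  unfolding power2_norm_eq_inner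
  by (simp add: det_2 complex_eq_iff inner_vec_def sum_3 power2_eq_square)

lemma quat_in_SU2_iff: "quat t v \<in> SU2 \<longleftrightarrow> t\<^sup>2 + (norm v)\<^sup>2 = 1"
proof -
  have "quat t v ** madj (quat t v) = quat (t\<^sup>2 + (norm v)\<^sup>2) 0"
    unfolding power2_norm_eq_inner by (simp add: madj_quat mult_quat power2_eq_square)
  then show ?thesis
    unfolding SU2_def mem_Collect_eq det_quat of_real_eq_1_iff quat_one[symmetric] quat_eq_iff
    by auto
qed

lemma matrix_inv_works:
  fixes A :: "'a::semiring_1^'n^'m"
  assumes "invertible A"
  shows "A ** matrix_inv A = mat 1" "matrix_inv A ** A = mat 1"
  using someI_ex[OF assms[unfolded invertible_def]] by (simp_all add: matrix_inv_def)

lemma matrix_inv_unique: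
  fixes A :: "'a::semiring_1^'n^'m"
  assumes "A ** B = mat 1" "B ** A = mat 1"
  shows "matrix_inv A = B"
proof -
  have "invertible A"
    using assms unfolding invertible_def by blast
  have "matrix_inv A = matrix_inv A ** (A ** B)"
    using assms by simp
  also have "\<dots> = B"
    using matrix_inv_works(2)[OF \<open>invertible A\<close>] by (simp add: matrix_mul_assoc)
  finally show ?thesis .
qed

lemma SU2_matrix_inv: "M \<in> SU2 \<Longrightarrow> matrix_inv M = madj M"
  by (simp add: SU2_def matrix_inv_unique matrix_left_right_inverse)

lemma SU2_invertible:
  assumes "M \<in> SU2"
  shows "invertible M"
proof -
  have "M ** madj M = mat 1" "madj M ** M = mat 1"
    using assms by (simp_all add: SU2_def matrix_left_right_inverse)
  then show ?thesis
    unfolding invertible_def by blast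
qed

lemma SU2_imp_quat:
  assumes "M \<in> SU2"
  obtains t v where "M = quat t v" "t\<^sup>2 + (norm v)\<^sup>2 = 1"
proof -
  define adj :: cmat where
    "adj = (\<chi> i j. if i = 1 then (if j = 1 then M$2$2 else - M$1$2)
                    else (if j = 1 then - M$2$1 else M$1$1))"
  have "adj ** M = mat 1"
    using assms by (simp add: SU2_def adj_def det_2 vec_eq_iff forall_2 matrix_matrix_mult_def
        sum_2 mat_def algebra_simps)
  then have "madj M = adj"
    using SU2_matrix_inv[OF assms] matrix_inv_unique[of M adj] matrix_left_right_inverse[of adj M]
    by simp
  then have "cnj (M$1$1) = M$2$2" "cnj (M$2$1) = - M$1$2"
    by (auto simp: madj_def adj_def vec_eq_iff forall_2 dest!: spec[of _ 1] spec[of _ 2])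
  then have "M$2$2 = cnj (M$1$1)" "M$2$1 = - cnj (M$1$2)"
    by (simp_all add: complex_eq_iff)
  then have "M = quat (Re (M$1$1)) (vector [Im (M$1$1), Re (M$1$2), Im (M$1$2)])"
    by (simp add: vec_eq_iff forall_2 complex_eq_iff)
  with assms that show thesis
    by (metis quat_in_SU2_iff)
qed

lemma mtr_mult_commute: "mtr (X ** Y) = mtr (Y ** X)"
  by (simp add: mtr_def matrix_matrix_mult_def sum_2 algebra_simps)

lemma mtr_conj:
  assumes "invertible g"
  shows "mtr (g ** X ** matrix_inv g) = mtr X"
  using matrix_inv_works[OF assms] mtr_mult_commute[of "g ** X" "matrix_inv g"]
  by (simp add: matrix_mul_assoc)

lemma mult_conj:
  fixes g X Y :: "'a::semiring_1^'n^'n"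
  assumes "invertible g"
  shows "(g ** X ** matrix_inv g) ** (g ** Y ** matrix_inv g) = g ** (X ** Y) ** matrix_inv g"
proof -
  have cancel: "matrix_inv g ** (g ** Z) = Z" for Z :: "'a^'n^'n"
    using matrix_inv_works(2)[OF assms] by (simp add: matrix_mul_assoc)
  show ?thesis
    by (simp add: cancel matrix_mul_assoc[symmetric])
qed

section \<open>Endpoints of the intervals I_{s,t}\<close>

lemma is_endpoint_trace_iff:
  assumes "s\<^sup>2 + (norm v)\<^sup>2 = 1" "t\<^sup>2 + (norm w)\<^sup>2 = 1"
  shows "is_endpoint (2 * (s * t - v \<bullet> w)) (2 * s) (2 * t) \<longleftrightarrow> \<bar>v \<bullet> w\<bar> = norm v * norm w"
proof -
  define N where "N = norm v * norm w"
  have "(2 * s)\<^sup>2 - 4 = - 4 * (norm v)\<^sup>2" "(2 * t)\<^sup>2 - 4 = - 4 * (norm w)\<^sup>2"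
    using assms by (simp_all add: power_mult_distrib)
  then have "((2 * s)\<^sup>2 - 4) * ((2 * t)\<^sup>2 - 4) = (4 * N)\<^sup>2"
    by (simp add: N_def power_mult_distrib)
  then have sqrt_eq: "sqrt (((2 * s)\<^sup>2 - 4) * ((2 * t)\<^sup>2 - 4)) = 4 * N"
    by (simp only: real_sqrt_abs) (simp add: N_def)
  have "0 \<le> N"
    by (simp add: N_def)
  then show ?thesis
    unfolding is_endpoint_def I_lo_def I_hi_def sqrt_eq N_def[symmetric]
    by (simp add: algebra_simps) arith
qed

lemma is_endpoint_trace_imp_parallel:
  assumes "s\<^sup>2 + (norm v)\<^sup>2 = 1" "t\<^sup>2 + (norm w)\<^sup>2 = 1" "v \<noteq> 0"
    and "is_endpoint (2 * (s * t - v \<bullet> w)) (2 * s) (2 * t)"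
  obtains c where "w = c *\<^sub>R v"
  using assms is_endpoint_trace_iff norm_cauchy_schwarz_equal collinear_lemma
  by (metis scale_zero_left)

lemma is_endpoint_cos_add: "is_endpoint (2 * cos (\<alpha> + \<beta>)) (2 * cos \<alpha>) (2 * cos \<beta>)"
proof -
  let ?e = "axis 2 1 :: real^3"
  have "is_endpoint (2 * (cos \<alpha> * cos \<beta> - (sin \<alpha> *\<^sub>R ?e) \<bullet> (sin \<beta> *\<^sub>R ?e)))
      (2 * cos \<alpha>) (2 * cos \<beta>)"
    by (subst is_endpoint_trace_iff) (simp_all add: abs_mult)
  then show ?thesis
    by (simp add: cos_add mult.commute)
qed

lemma cos_pair_sums_eq:
  fixes \<alpha> \<beta> \<gamma> \<delta> :: real
  assumes "cos (\<alpha> + \<beta> + \<gamma> + \<delta>) = 1"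
  shows "cos (\<alpha> + \<beta>) = cos (\<gamma> + \<delta>)" "cos (\<beta> + \<gamma>) = cos (\<alpha> + \<delta>)"
    "cos (\<alpha> + \<gamma>) = cos (\<beta> + \<delta>)"
proof -
  have "sin (\<alpha> + \<beta> + \<gamma> + \<delta>) = 0"
    using assms sin_cos_squared_add[of "\<alpha> + \<beta> + \<gamma> + \<delta>"] by simp
  then have cos_complement: "cos \<phi> = cos \<psi>" if "\<phi> + \<psi> = \<alpha> + \<beta> + \<gamma> + \<delta>" for \<phi> \<psi>
  proof -
    have "\<phi> = (\<alpha> + \<beta> + \<gamma> + \<delta>) - \<psi>"
      using that by simp
    then show ?thesis
      using assms \<open>sin (\<alpha> + \<beta> + \<gamma> + \<delta>) = 0\<close> by (simp add: cos_diff)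
  qed
  show "cos (\<alpha> + \<beta>) = cos (\<gamma> + \<delta>)" "cos (\<beta> + \<gamma>) = cos (\<alpha> + \<delta>)"
    "cos (\<alpha> + \<gamma>) = cos (\<beta> + \<delta>)"
    by (rule cos_complement; simp)+
qed

section \<open>Spin(2)-representations\<close>

lemma eitheta_quat: "eitheta \<theta> = quat (cos \<theta>) (sin \<theta> *\<^sub>R axis 2 1)"
  by (simp add: eitheta_def vec_eq_iff forall_2 complex_eq_iff axis_def)

lemma mult_eitheta: "eitheta \<alpha> ** eitheta \<beta> = eitheta (\<alpha> + \<beta>)"
  by (simp add: eitheta_quat mult_quat quat_eq_iff cos_add sin_add cross_mult_left cross_mult_right
      algebra_simps)

lemma mtr_eitheta: "mtr (eitheta \<theta>) = complex_of_real (2 * cos \<theta>)"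
  by (simp add: eitheta_quat mtr_quat)

lemma generator_in_rep_image: "X \<in> {RA, RB, RC, RD} \<Longrightarrow> X \<in> rep_image RA RB RC RD"
  using rep_image.mul[OF rep_image.one] by (metis matrix_mul_lid)

lemma Spin2_rep_imp_endpoints:
  assumes rep: "is_rep RA RB RC RD" and Spin2: "is_G_rep Spin2 RA RB RC RD"
    and "mtr RA = complex_of_real a" "mtr RB = complex_of_real b"
    and "mtr RC = complex_of_real c" "mtr RD = complex_of_real d"
    and "mtr (RA ** RB) = complex_of_real x" "mtr (RB ** RC) = complex_of_real y"
    and "mtr (RC ** RA) = complex_of_real z"
  shows "is_endpoint x a b \<and> is_endpoint x c d \<and> is_endpoint y b c \<and> is_endpoint y a d \<and>
    is_endpoint z a c \<and> is_endpoint z b d"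
proof -
  obtain g where "g \<in> SU2"
    and conj: "\<And>M. M \<in> rep_image RA RB RC RD \<Longrightarrow> g ** M ** matrix_inv g \<in> Spin2"
    using Spin2 by (auto simp: is_G_rep_def)
  have g: "invertible g"
    using \<open>g \<in> SU2\<close> by (rule SU2_invertible)
  define \<phi> where "\<phi> M = g ** M ** matrix_inv g" for M
  have \<phi>_mult: "\<phi> (X ** Y) = \<phi> X ** \<phi> Y" for X Y
    by (simp add: \<phi>_def mult_conj[OF g])
  have "\<exists>\<theta>. \<phi> X = eitheta \<theta>" if "X \<in> {RA, RB, RC, RD}" for X
    using conj[OF generator_in_rep_image[OF that]] by (auto simp: \<phi>_def Spin2_def)
  then obtain \<alpha> \<beta> \<gamma> \<delta> where angles: "\<phi> RA = eitheta \<alpha>" "\<phi> RB = eitheta \<beta>"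
    "\<phi> RC = eitheta \<gamma>" "\<phi> RD = eitheta \<delta>"
    by (metis insertI1 insertI2)
  have trace: "r = 2 * cos \<theta>" if "mtr X = complex_of_real r" "\<phi> X = eitheta \<theta>" for X r \<theta>
    using that mtr_conj[OF g, of X] mtr_eitheta[of \<theta>] unfolding \<phi>_def
    by (metis of_real_eq_iff)
  have "eitheta (\<alpha> + \<beta> + \<gamma> + \<delta>) = \<phi> (RA ** RB ** RC ** RD)"
    by (simp add: \<phi>_mult angles mult_eitheta)
  also have "\<dots> = mat 1"
    using rep matrix_inv_works[OF g] by (simp add: is_rep_def \<phi>_def)
  finally have "cos (\<alpha> + \<beta> + \<gamma> + \<delta>) = 1"
    by (simp add: eitheta_quat quat_one[symmetric] quat_eq_iff)
  note cos_eq = cos_pair_sums_eq[OF this]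
  have traces: "a = 2 * cos \<alpha>" "b = 2 * cos \<beta>" "c = 2 * cos \<gamma>" "d = 2 * cos \<delta>"
    "x = 2 * cos (\<alpha> + \<beta>)" "y = 2 * cos (\<beta> + \<gamma>)" "z = 2 * cos (\<alpha> + \<gamma>)"
    using assms(3-9) by (auto intro!: trace simp: \<phi>_mult angles mult_eitheta add.commute)
  have "is_endpoint x a b" "is_endpoint y b c" "is_endpoint z a c"
    unfolding traces by (rule is_endpoint_cos_add)+
  moreover have "is_endpoint x c d" "is_endpoint y a d" "is_endpoint z b d"
    unfolding traces cos_eq by (rule is_endpoint_cos_add)+
  ultimately show ?thesis
    by blast
qed

section \<open>Circle subgroups\<close>

definition axis_circle :: "real^3 \<Rightarrow> cmat set" where
  "axis_circle u = {quat t (s *\<^sub>R u) | t s. t\<^sup>2 + s\<^sup>2 = 1}"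

lemma axis_circle_axis2: "axis_circle (axis 2 1) = Spin2"
proof (intro equalityI subsetI)
  fix M
  assume "M \<in> axis_circle (axis 2 1)"
  then obtain t s where M: "M = quat t (s *\<^sub>R axis 2 1)" and unit: "t\<^sup>2 + s\<^sup>2 = 1"
    by (auto simp: axis_circle_def)
  obtain \<theta> where "t = cos \<theta>" "s = sin \<theta>"
    using sincos_total_2pi[OF unit] by metis
  then show "M \<in> Spin2"
    by (simp add: M Spin2_def eitheta_quat)
next
  fix M
  assume "M \<in> Spin2"
  then obtain \<theta> where "M = quat (cos \<theta>) (sin \<theta> *\<^sub>R axis 2 1)"
    by (auto simp: Spin2_def eitheta_quat)
  moreover have "(cos \<theta>)\<^sup>2 + (sin \<theta>)\<^sup>2 = 1"
    by simp
  ultimately show "M \<in> axis_circle (axis 2 1)"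
    unfolding axis_circle_def by blast
qed

lemma axis_circle_uminus: "axis_circle (- u) = axis_circle u"
proof -
  have "axis_circle (- v) \<subseteq> axis_circle v" for v
  proof
    fix M
    assume "M \<in> axis_circle (- v)"
    then obtain t s where "M = quat t ((- s) *\<^sub>R v)" "t\<^sup>2 + (- s)\<^sup>2 = 1"
      by (auto simp: axis_circle_def)
    then show "M \<in> axis_circle v"
      unfolding axis_circle_def by blast
  qed
  from this[of u] this[of "- u"] show ?thesis
    by auto
qed

lemma one_in_axis_circle: "mat 1 \<in> axis_circle u"
proof -
  have "mat 1 = quat 1 (0 *\<^sub>R u)" "(1::real)\<^sup>2 + 0\<^sup>2 = 1"
    by (simp_all add: quat_one)
  then show ?thesis
    unfolding axis_circle_def by blast
qed

lemma quat_in_axis_circle: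
  assumes "norm u = 1" "t\<^sup>2 + (norm v)\<^sup>2 = 1" "v = c *\<^sub>R u"
  shows "quat t v \<in> axis_circle u"
  using assms by (auto simp: axis_circle_def)

lemma axis_circle_subset_SU2: "norm u = 1 \<Longrightarrow> axis_circle u \<subseteq> SU2"
  by (auto simp: axis_circle_def quat_in_SU2_iff)

lemma mult_axis_circle:
  assumes u: "norm u = 1" and "M \<in> axis_circle u" "N \<in> axis_circle u"
  shows "M ** N \<in> axis_circle u"
proof -
  obtain t1 s1 t2 s2 where M: "M = quat t1 (s1 *\<^sub>R u)" "t1\<^sup>2 + s1\<^sup>2 = 1"
    and N: "N = quat t2 (s2 *\<^sub>R u)" "t2\<^sup>2 + s2\<^sup>2 = 1"
    using assms(2,3) by (auto simp: axis_circle_def)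
  have "u \<bullet> u = 1"
    using u by (simp add: dot_square_norm)
  then have "M ** N = quat (t1 * t2 - s1 * s2) ((t1 * s2 + t2 * s1) *\<^sub>R u)"
    by (simp add: M N mult_quat quat_eq_iff cross_mult_left cross_mult_right algebra_simps)
  moreover have "(t1 * t2 - s1 * s2)\<^sup>2 + (t1 * s2 + t2 * s1)\<^sup>2 = (t1\<^sup>2 + s1\<^sup>2) * (t2\<^sup>2 + s2\<^sup>2)"
    by (simp add: power2_eq_square algebra_simps)
  ultimately show ?thesis
    using M(2) N(2) by (auto simp: axis_circle_def)
qed

lemma matrix_inv_axis_circle:
  assumes u: "norm u = 1" and M: "M \<in> axis_circle u"
  shows "matrix_inv M \<in> axis_circle u"
proof -
  obtain t s where "M = quat t (s *\<^sub>R u)" "t\<^sup>2 + s\<^sup>2 = 1"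
    using M by (auto simp: axis_circle_def)
  moreover have "M \<in> SU2"
    using axis_circle_subset_SU2[OF u] M by blast
  ultimately have "matrix_inv M = quat t ((- s) *\<^sub>R u)" "t\<^sup>2 + (- s)\<^sup>2 = 1"
    by (simp_all add: SU2_matrix_inv madj_quat)
  then show ?thesis
    unfolding axis_circle_def by blast
qed

lemma rep_image_subset_axis_circle:
  assumes u: "norm u = 1" and gens: "{RA, RB, RC, RD} \<subseteq> axis_circle u"
  shows "rep_image RA RB RC RD \<subseteq> axis_circle u"
proof
  fix M
  assume "M \<in> rep_image RA RB RC RD"
  then show "M \<in> axis_circle u"
  proof induction
    case one
    show ?case
      by (rule one_in_axis_circle)
  next
    case (mul M X)
    then show ?case
      using mult_axis_circle[OF u] gens by blast
  next
    case (mul_inv M X)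
    then show ?case
      using mult_axis_circle[OF u] matrix_inv_axis_circle[OF u] gens by blast
  qed
qed

(* g is the normalisation of 1 + u.e + u x e with e = axis 2 1, the unit quaternion rotating u
   onto e about the axis u x e; it degenerates only at u = -e, whence u$2 >= 0. *)
lemma rotate_to_axis2:
  assumes u: "norm u = 1" and u2: "u $ 2 \<ge> 0"
  obtains g where "g \<in> SU2" "\<And>t s. g ** quat t (s *\<^sub>R u) ** matrix_inv g = quat t (s *\<^sub>R axis 2 1)"
proof -
  define k where "k = 1 / sqrt (2 + 2 * u$2)"
  define g where "g = quat (k * (1 + u$2)) (k *\<^sub>R (u \<times> axis 2 1))"
  have sphere: "(u$1)\<^sup>2 + (u$2)\<^sup>2 + (u$3)\<^sup>2 = 1"
    using u by (simp add: norm_eq_1 inner_vec_def sum_3 power2_eq_square)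
  have k: "k\<^sup>2 * (2 + 2 * u$2) = 1"
    using u2 by (simp add: k_def power_divide)
  have "(k * (1 + u$2))\<^sup>2 + (norm (k *\<^sub>R (u \<times> axis 2 1)))\<^sup>2 = 1"
    unfolding power2_norm_eq_inner using sphere k
    by (simp add: cross3_def inner_vec_def sum_3 axis_def power2_eq_square algebra_simps) algebra
  then have g: "g \<in> SU2"
    by (simp add: g_def quat_in_SU2_iff)
  have ginv: "matrix_inv g = quat (k * (1 + u$2)) (- (k *\<^sub>R (u \<times> axis 2 1)))"
    using SU2_matrix_inv[OF g] by (simp add: g_def madj_quat)
  have "g ** quat t (s *\<^sub>R u) ** matrix_inv g = quat t (s *\<^sub>R axis 2 1)" for t s
    unfolding ginv unfolding g_def mult_quat quat_eq_iff using sphere k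
    by (simp add: vec_eq_iff forall_3 cross3_def inner_vec_def sum_3 axis_def power2_eq_square
        algebra_simps; algebra)
  with g show thesis
    using that by blast
qed

lemma axis_circle_conj_Spin2:
  assumes u: "norm u = 1"
  obtains g where "g \<in> SU2" "\<And>M. M \<in> axis_circle u \<Longrightarrow> g ** M ** matrix_inv g \<in> Spin2"
proof -
  have upper_hemisphere: "\<exists>g \<in> SU2. \<forall>M \<in> axis_circle v. g ** M ** matrix_inv g \<in> Spin2"
    if v: "norm v = 1" "v $ 2 \<ge> 0" for v
  proof -
    obtain g where "g \<in> SU2"
      and conj: "\<And>t s. g ** quat t (s *\<^sub>R v) ** matrix_inv g = quat t (s *\<^sub>R axis 2 1)"
      using rotate_to_axis2[OF v] by blast
    moreover have "g ** M ** matrix_inv g \<in> axis_circle (axis 2 1)" if "M \<in> axis_circle v" for M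
    proof -
      obtain t s where M: "M = quat t (s *\<^sub>R v)" and unit: "t\<^sup>2 + s\<^sup>2 = 1"
        using \<open>M \<in> axis_circle v\<close> by (auto simp: axis_circle_def)
      show ?thesis
        unfolding axis_circle_def M conj using unit by blast
    qed
    ultimately show ?thesis
      by (auto simp: axis_circle_axis2)
  qed
  have "\<exists>g \<in> SU2. \<forall>M \<in> axis_circle u. g ** M ** matrix_inv g \<in> Spin2"
  proof (cases "u $ 2 \<ge> 0")
    case True
    then show ?thesis
      using upper_hemisphere u by blast
  next
    case False
    then have "norm (- u) = 1" "(- u) $ 2 \<ge> 0"
      using u by simp_all
    then show ?thesis
      using upper_hemisphere axis_circle_uminus[of u] by metis
  qed
  then show thesis
    using that by blast
qed

lemma axis_circle_imp_Spin2_rep: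
  assumes "norm u = 1" "{RA, RB, RC, RD} \<subseteq> axis_circle u"
  shows "is_G_rep Spin2 RA RB RC RD"
proof -
  obtain g where "g \<in> SU2" "\<And>M. M \<in> axis_circle u \<Longrightarrow> g ** M ** matrix_inv g \<in> Spin2"
    using axis_circle_conj_Spin2[OF assms(1)] by blast
  then show ?thesis
    using rep_image_subset_axis_circle[OF assms] by (auto simp: is_G_rep_def)
qed

lemma is_rep_last_generator: "is_rep RA RB RC RD \<Longrightarrow> RD = matrix_inv (RA ** RB ** RC)"
  unfolding is_rep_def by (metis matrix_inv_unique matrix_left_right_inverse)

lemma endpoints_imp_Spin2_rep:
  assumes rep: "is_rep RA RB RC RD" and "a \<noteq> 2" "a \<noteq> -2"
    and "mtr RA = complex_of_real a" "mtr RB = complex_of_real b" "mtr RC = complex_of_real c"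
    and "mtr (RA ** RB) = complex_of_real x" "mtr (RC ** RA) = complex_of_real z"
    and "is_endpoint x a b" "is_endpoint z a c"
  shows "is_G_rep Spin2 RA RB RC RD"
proof -
  have SU2: "RA \<in> SU2" "RB \<in> SU2" "RC \<in> SU2"
    using rep by (simp_all add: is_rep_def)
  obtain tA vA tB vB tC vC where quats: "RA = quat tA vA" "RB = quat tB vB" "RC = quat tC vC"
    and A: "tA\<^sup>2 + (norm vA)\<^sup>2 = 1" and B: "tB\<^sup>2 + (norm vB)\<^sup>2 = 1"
    and C: "tC\<^sup>2 + (norm vC)\<^sup>2 = 1"
    using SU2_imp_quat[OF SU2(1)] SU2_imp_quat[OF SU2(2)] SU2_imp_quat[OF SU2(3)] by metis
  have traces: "a = 2 * tA" "b = 2 * tB" "c = 2 * tC"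
    "x = 2 * (tA * tB - vA \<bullet> vB)" "z = 2 * (tA * tC - vA \<bullet> vC)"
    using assms(4-8) unfolding quats mtr_quat mtr_mult_quat of_real_eq_iff
    by (simp_all add: mult.commute inner_commute)
  have "vA \<noteq> 0"
    using A assms(2,3) traces(1) by (auto simp: power2_eq_1_iff)
  obtain cB cC where "vB = cB *\<^sub>R vA" "vC = cC *\<^sub>R vA"
    using is_endpoint_trace_imp_parallel[OF A B \<open>vA \<noteq> 0\<close>]
      is_endpoint_trace_imp_parallel[OF A C \<open>vA \<noteq> 0\<close>] assms(9,10) traces by metis
  define u where "u = (1 / norm vA) *\<^sub>R vA"
  have u: "norm u = 1" "vA = norm vA *\<^sub>R u" "vB = (cB * norm vA) *\<^sub>R u" "vC = (cC * norm vA) *\<^sub>R u"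
    using \<open>vA \<noteq> 0\<close> \<open>vB = cB *\<^sub>R vA\<close> \<open>vC = cC *\<^sub>R vA\<close> by (simp_all add: u_def)
  have "{RA, RB, RC} \<subseteq> axis_circle u"
    using quat_in_axis_circle[OF u(1) A u(2)] quat_in_axis_circle[OF u(1) B u(3)]
      quat_in_axis_circle[OF u(1) C u(4)] by (simp add: quats)
  moreover have "RD \<in> axis_circle u"
    using is_rep_last_generator[OF rep] calculation
    by (simp add: matrix_inv_axis_circle[OF u(1)] mult_axis_circle[OF u(1)])
  ultimately show ?thesis
    using axis_circle_imp_Spin2_rep[OF u(1)] by simp
qed

theorem proposition3p1:
  fixes a b c d x y z :: real and RA RB RC RD :: cmat
  assumes "a \<in> {-2..2} - {-2, 2}" "b \<in> {-2..2} - {-2, 2}"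
      and "c \<in> {-2..2} - {-2, 2}" "d \<in> {-2..2} - {-2, 2}"
      and "(RA, RB, RC, RD) \<in> H_kappa a b c d"
      and "mtr (RA ** RB) = complex_of_real x"
      and "mtr (RB ** RC) = complex_of_real y"
      and "mtr (RC ** RA) = complex_of_real z"
  shows "is_G_rep Spin2 RA RB RC RD \<longleftrightarrow>
           (is_endpoint x a b \<and> is_endpoint x c d \<and>
            is_endpoint y b c \<and> is_endpoint y a d \<and>
            is_endpoint z a c \<and> is_endpoint z b d)"
proof -
  have rep: "is_rep RA RB RC RD"
    and traces: "mtr RA = complex_of_real a" "mtr RB = complex_of_real b"
      "mtr RC = complex_of_real c" "mtr RD = complex_of_real d"
    using assms(5) by (simp_all add: H_kappa_def)
  have "a \<noteq> 2" "a \<noteq> -2"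
    using assms(1) by auto
  then show ?thesis
    using Spin2_rep_imp_endpoints[OF rep _ traces assms(6-8)]
      endpoints_imp_Spin2_rep[OF rep _ _ traces(1-3) assms(6,8)] by blast
qed

end
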